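(* Let $(a_0,\ldots,a_n)$ be a finite sequence of positive integers. For every $\varepsilon>0$ there is $m_0>0$ such that for every integer $m\ge m_0$ and every positive integer $N$, $$|\Phi^-(\beta^N)-\Phi^-(\beta^1)|<\frac{\varepsilon}{4},$$ where $\beta^N=\beta^N_m$ is as defined in the context.
   Context: For positive integers $d_0,d_1,\ldots$, $[d_0,d_1,d_2,\ldots]$ denotes the continued fraction $\cfrac{1}{d_0+\cfrac{1}{d_1+\cfrac{1}{d_2+\cdots}}}$, and for $\beta=[d_0,d_1,\ldots]$ we write $\alpha_j(\beta)=[d_j,d_{j+1},\ldots]$. $\Phi(\beta)=\sum_{k\ge 0}\alpha_0(\beta)\cdots\alpha_{k-1}(\beta)\log\frac{1}{\alpha_k(\beta)}$ is the Yoccoz Brjuno function. For integers $m\ge1$, $N\ge1$, $\beta^N$ is the number whose digits (indexed from $0$) are $a_0,\ldots,a_n$ in positions $0,\ldots,n$, $N$ in position $n+m$, and $1$ in all other positions (so $\beta^1=[a_0,\ldots,a_n,1,1,\ldots]$). For such $\beta$ (with $m$ fixed), $\Phi^-(\beta)=\Phi(\beta)-\alpha_0(\beta)\alpha_1(\beta)\cdots\alpha_{n+m-1}(\beta)\log\frac{1}{\alpha_{n+m}(\beta)}$. *)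

theory Defs
  imports Complex_Main
begin

primrec cfin :: "nat \<Rightarrow> (nat \<Rightarrow> nat) \<Rightarrow> real" where
  "cfin 0 d = 0"
| "cfin (Suc k) d = 1 / (real (d 0) + cfin k (\<lambda>i. d (Suc i)))"

definition cfrac :: "(nat \<Rightarrow> nat) \<Rightarrow> real" where
  "cfrac d = lim (\<lambda>k. cfin k d)"

definition alpha :: "nat \<Rightarrow> (nat \<Rightarrow> nat) \<Rightarrow> real" where
  "alpha j d = cfrac (\<lambda>i. d (i + j))"

definition Phi :: "(nat \<Rightarrow> nat) \<Rightarrow> real" where
  "Phi d = (\<Sum>k. (\<Prod>i<k. alpha i d) * ln (1 / alpha k d))"

definition Phi_minus :: "nat \<Rightarrow> nat \<Rightarrow> (nat \<Rightarrow> nat) \<Rightarrow> real" where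
  "Phi_minus m n d = Phi d - (\<Prod>i<n + m. alpha i d) * ln (1 / alpha (n + m) d)"

definition betaN :: "(nat \<Rightarrow> nat) \<Rightarrow> nat \<Rightarrow> nat \<Rightarrow> nat \<Rightarrow> (nat \<Rightarrow> nat)" where
  "betaN a n m N = (\<lambda>i. if i \<le> n then a i else if i = n + m then N else 1)"

end

(* The digits of beta^N and beta^1 agree except at position p = n + m. Two steps of the map
   x -> 1/(a + x) with a >= 1 contract [0,1] by the factor 1/4, so the tails alpha_j of the two numbers
   differ by at most 2 * 2^-(p-j) for j <= p, whatever N is. Since alpha_j * alpha_(j+1) <= 1/2, the
   k-th term of the Brjuno series is at most 2 (3/4)^k d_k. With the p-th terms removed, split the
   difference of the two series at K: all remaining digits are bounded by A = a_0 + ... + a_n + 1, so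
   the terms k >= K contribute at most 8 A (3/4)^K, and each of the first K terms is O(K A 2^-(p-K))
   by the closeness of the alpha_j. Choosing K first and then m large makes both parts small,
   uniformly in N. *)

theory Submission
  imports Defs
begin

lemma exists_mult_power_less:
  fixes c r e :: real
  assumes "\<bar>r\<bar> < 1" "e > 0"
  shows "\<exists>k. c * r^k < e"
proof -
  have "(\<lambda>k. c * r^k) \<longlonglongrightarrow> 0" using assms by (intro tendsto_mult_right_zero LIMSEQ_power_zero) simp
  then have "\<forall>\<^sub>F k in sequentially. c * r^k < e" using assms(2) by (rule order_tendstoD(2))
  then show ?thesis by (auto simp: eventually_sequentially)
qed

primrec cfin_tail :: "nat \<Rightarrow> (nat \<Rightarrow> nat) \<Rightarrow> real \<Rightarrow> real" where
  "cfin_tail 0 d x = x"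
| "cfin_tail (Suc k) d x = 1 / (real (d 0) + cfin_tail k (\<lambda>i. d (Suc i)) x)"

lemma cfin_tail_nonneg: "0 \<le> x \<Longrightarrow> 0 \<le> cfin_tail k d x"
  by (induction k arbitrary: d) auto

lemma cfin_tail_le_1:
  assumes "\<forall>i. d i \<ge> 1" "0 \<le> x" "x \<le> 1"
  shows "cfin_tail k d x \<le> 1"
  using assms(1)
proof (induction k arbitrary: d)
  case 0
  then show ?case using assms(3) by simp
next
  case (Suc k)
  then have "real (d 0) \<ge> 1" by simp
  moreover have "0 \<le> cfin_tail k (\<lambda>i. d (Suc i)) x" by (rule cfin_tail_nonneg[OF assms(2)])
  ultimately show ?case by (simp add: divide_le_eq)
qed

lemma cfin_tail_cong: "\<forall>i<k. d i = e i \<Longrightarrow> cfin_tail k d x = cfin_tail k e x"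
  by (induction k arbitrary: d e) auto

lemma cfin_add: "cfin (k + l) d = cfin_tail k d (cfin l (\<lambda>i. d (i + k)))"
  by (induction k arbitrary: d) auto

lemma cfin_bounds:
  assumes "\<forall>i. d i \<ge> 1"
  shows "0 \<le> cfin k d" "cfin k d \<le> 1"
  using cfin_add[of k 0 d] cfin_tail_nonneg[of 0 k d] cfin_tail_le_1[OF assms, of 0 k] by simp_all

lemma abs_inverse_shift_diff_le:
  fixes a u v :: real
  assumes "a \<ge> 1" "u \<ge> 0" "v \<ge> 0"
  shows "\<bar>1 / (a + u) - 1 / (a + v)\<bar> \<le> \<bar>u - v\<bar>"
proof -
  have den: "(a + u) * (a + v) \<ge> 1" using assms mult_mono[of 1 "a + u" 1 "a + v"] by simp
  have "1 / (a + u) - 1 / (a + v) = (v - u) / ((a + u) * (a + v))"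
    using assms by (simp add: field_simps)
  then have "\<bar>1 / (a + u) - 1 / (a + v)\<bar> = \<bar>u - v\<bar> / ((a + u) * (a + v))"
    using den by (simp add: abs_div abs_minus_commute)
  also have "\<dots> \<le> \<bar>u - v\<bar> / 1" using den by (intro divide_left_mono) auto
  finally show ?thesis by simp
qed

lemma abs_inverse_shift2_diff_le:
  fixes a b u v :: real
  assumes "a \<ge> 1" "b \<ge> 1" "u \<ge> 0" "v \<ge> 0"
  shows "\<bar>1 / (a + 1 / (b + u)) - 1 / (a + 1 / (b + v))\<bar> \<le> \<bar>u - v\<bar> / 4"
proof -
  have pu: "a * (b + u) + 1 \<ge> 2" and pv: "a * (b + v) + 1 \<ge> 2"
    using assms mult_mono[of 1 a 1 "b + u"] mult_mono[of 1 a 1 "b + v"] by simp_all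
  then have den: "(a * (b + u) + 1) * (a * (b + v) + 1) \<ge> 4"
    using mult_mono[of 2 "a * (b + u) + 1" 2 "a * (b + v) + 1"] by simp
  have "1 / (a + 1 / (b + u)) = (b + u) / (a * (b + u) + 1)"
    and "1 / (a + 1 / (b + v)) = (b + v) / (a * (b + v) + 1)"
    using assms by (simp_all add: field_simps)
  moreover have "(b + u) / (a * (b + u) + 1) - (b + v) / (a * (b + v) + 1)
      = (u - v) / ((a * (b + u) + 1) * (a * (b + v) + 1))"
    using pu pv by (simp add: field_simps)
  ultimately have "\<bar>1 / (a + 1 / (b + u)) - 1 / (a + 1 / (b + v))\<bar>
      = \<bar>u - v\<bar> / ((a * (b + u) + 1) * (a * (b + v) + 1))"
    using den by (simp add: abs_div)
  also have "\<dots> \<le> \<bar>u - v\<bar> / 4" using den by (intro divide_left_mono) auto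
  finally show ?thesis .
qed

lemma cfin_tail_contraction:
  assumes "\<forall>i. d i \<ge> 1" "0 \<le> x" "x \<le> 1" "0 \<le> y" "y \<le> 1"
  shows "\<bar>cfin_tail k d x - cfin_tail k d y\<bar> \<le> 2 * (1/2)^k * \<bar>x - y\<bar>"
  using assms(1)
proof (induction k arbitrary: d rule: nat_induct2)
  case 1
  then have "real (d 0) \<ge> 1" by simp
  then show ?case using assms abs_inverse_shift_diff_le[of "d 0" x y] by simp
next
  case (step k)
  let ?d2 = "\<lambda>i. d (Suc (Suc i))"
  have "\<bar>cfin_tail (k + 2) d x - cfin_tail (k + 2) d y\<bar>
      \<le> \<bar>cfin_tail k ?d2 x - cfin_tail k ?d2 y\<bar> / 4"
    using step.prems cfin_tail_nonneg[OF assms(2)] cfin_tail_nonneg[OF assms(4)]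
      abs_inverse_shift2_diff_le[of "d 0" "d 1" "cfin_tail k ?d2 x" "cfin_tail k ?d2 y"]
    by (simp add: numeral_2_eq_2)
  also have "\<dots> \<le> 2 * (1/2)^k * \<bar>x - y\<bar> / 4"
    using step.IH[of ?d2] step.prems by (intro divide_right_mono) auto
  finally show ?case by (simp add: power_add mult_ac)
qed simp

lemma cfin_dist_le:
  assumes "\<forall>i. d i \<ge> 1" "M \<le> k" "M \<le> l"
  shows "\<bar>cfin k d - cfin l d\<bar> \<le> 2 * (1/2)^M"
proof -
  obtain k' l' where kl: "k = M + k'" "l = M + l'" using assms le_Suc_ex by blast
  let ?d = "\<lambda>i. d (i + M)"
  have d: "\<forall>i. ?d i \<ge> 1" using assms by auto
  have "\<bar>cfin k d - cfin l d\<bar> = \<bar>cfin_tail M d (cfin k' ?d) - cfin_tail M d (cfin l' ?d)\<bar>"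
    using kl cfin_add by simp
  also have "\<dots> \<le> 2 * (1/2)^M * \<bar>cfin k' ?d - cfin l' ?d\<bar>"
    using cfin_tail_contraction assms(1) cfin_bounds[OF d] by blast
  also have "\<dots> \<le> 2 * (1/2)^M * 1"
    using cfin_bounds[OF d, of k'] cfin_bounds[OF d, of l'] by (intro mult_left_mono) auto
  finally show ?thesis by simp
qed

lemma LIMSEQ_cfin:
  assumes "\<forall>i. d i \<ge> 1"
  shows "(\<lambda>k. cfin k d) \<longlonglongrightarrow> cfrac d"
proof -
  have "Cauchy (\<lambda>k. cfin k d)"
  proof (rule CauchyI)
    fix r :: real assume "0 < r"
    then obtain M where M: "2 * (1/2)^M < r" using exists_mult_power_less[of "1/2" r 2] by auto
    have "norm (cfin k d - cfin l d) < r" if "M \<le> k" "M \<le> l" for k l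
      using cfin_dist_le[OF assms that] M by simp
    then show "\<exists>M. \<forall>k\<ge>M. \<forall>l\<ge>M. norm (cfin k d - cfin l d) < r" by blast
  qed
  then show ?thesis unfolding cfrac_def by (intro convergent_LIMSEQ_iff[THEN iffD1] Cauchy_convergent)
qed

lemma cfrac_bounds:
  assumes "\<forall>i. d i \<ge> 1"
  shows "0 \<le> cfrac d" "cfrac d \<le> 1"
  using LIMSEQ_cfin[OF assms] cfin_bounds[OF assms] by (meson LIMSEQ_le_const LIMSEQ_le_const2)+

lemma tendsto_cfin_tail:
  assumes "X \<longlonglongrightarrow> L" "L \<ge> 0" "\<forall>i. d i \<ge> 1"
  shows "(\<lambda>l. cfin_tail k d (X l)) \<longlonglongrightarrow> cfin_tail k d L"
  using assms(3)
proof (induction k arbitrary: d)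
  case 0
  then show ?case using assms(1) by simp
next
  case (Suc k)
  have "real (d 0) + cfin_tail k (\<lambda>i. d (Suc i)) L \<ge> 1"
    using Suc.prems cfin_tail_nonneg[OF assms(2)] by (simp add: add_increasing2)
  then show ?case using Suc by (auto intro!: tendsto_intros)
qed

lemma cfrac_eq_cfin_tail:
  assumes "\<forall>i. d i \<ge> 1"
  shows "cfrac d = cfin_tail k d (cfrac (\<lambda>i. d (i + k)))"
proof -
  let ?d = "\<lambda>i. d (i + k)"
  have d: "\<forall>i. ?d i \<ge> 1" using assms by auto
  have "(\<lambda>l. cfin (k + l) d) \<longlonglongrightarrow> cfrac d"
    using LIMSEQ_ignore_initial_segment[OF LIMSEQ_cfin[OF assms], of k] by (simp add: add.commute)
  then have "(\<lambda>l. cfin_tail k d (cfin l ?d)) \<longlonglongrightarrow> cfrac d"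
    by (simp add: cfin_add)
  moreover have "(\<lambda>l. cfin_tail k d (cfin l ?d)) \<longlonglongrightarrow> cfin_tail k d (cfrac ?d)"
    using tendsto_cfin_tail[OF LIMSEQ_cfin[OF d] cfrac_bounds(1)[OF d] assms] .
  ultimately show ?thesis by (rule LIMSEQ_unique)
qed

lemma alpha_eq_cfin_tail:
  assumes "\<forall>i. d i \<ge> 1"
  shows "alpha i d = cfin_tail k (\<lambda>j. d (j + i)) (alpha (i + k) d)"
  using cfrac_eq_cfin_tail[of "\<lambda>j. d (j + i)" k] assms unfolding alpha_def by (simp add: ac_simps)

lemma alpha_bounds:
  assumes "\<forall>i. d i \<ge> 1"
  shows "0 \<le> alpha i d" "alpha i d \<le> 1"
  unfolding alpha_def using assms by (auto intro: cfrac_bounds)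

lemma alpha_recurrence:
  assumes "\<forall>i. d i \<ge> 1"
  shows "alpha i d = 1 / (real (d i) + alpha (Suc i) d)"
  using alpha_eq_cfin_tail[OF assms, of i 1] by simp

lemma alpha_lower_bound:
  assumes "\<forall>i. d i \<ge> 1"
  shows "1 / (real (d i) + 1) \<le> alpha i d"
proof -
  have "real (d i) \<ge> 1" using assms by simp
  then show ?thesis
    using alpha_recurrence[OF assms, of i] alpha_bounds[OF assms, of "Suc i"]
    by (auto intro!: divide_left_mono)
qed

lemma alpha_pos: "\<forall>i. d i \<ge> 1 \<Longrightarrow> 0 < alpha i d"
  by (rule less_le_trans[OF _ alpha_lower_bound]) simp_all

lemma alpha_mult_alpha_Suc_le:
  assumes "\<forall>i. d i \<ge> 1"
  shows "alpha i d * alpha (Suc i) d \<le> 1/2"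
proof -
  let ?b = "alpha (Suc i) d"
  have b: "0 \<le> ?b" "?b \<le> 1" using alpha_bounds[OF assms] by auto
  have "real (d i) \<ge> 1" using assms by simp
  then have "alpha i d * ?b = ?b / (real (d i) + ?b)"
    using alpha_recurrence[OF assms, of i] b by simp
  also have "\<dots> \<le> 1/2" using b \<open>real (d i) \<ge> 1\<close> by (simp add: divide_le_eq)
  finally show ?thesis .
qed

lemma prod_alpha_le:
  assumes "\<forall>i. d i \<ge> 1"
  shows "(\<Prod>i<k. alpha i d) \<le> 2 * (3/4)^k"
proof (induction k rule: nat_induct2)
  case 1
  then show ?case using alpha_bounds[OF assms, of 0] by simp
next
  case (step k)
  have "(\<Prod>i<k + 2. alpha i d) = (\<Prod>i<k. alpha i d) * (alpha k d * alpha (Suc k) d)"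
    by (simp add: numeral_2_eq_2 mult.assoc)
  also have "\<dots> \<le> 2 * (3/4)^k * (1/2)"
    using step alpha_mult_alpha_Suc_le[OF assms, of k] alpha_bounds[OF assms]
    by (intro mult_mono) (auto intro!: prod_nonneg)
  also have "\<dots> \<le> 2 * (3/4)^(k + 2)" by (simp add: power_add)
  finally show ?case .
qed simp

lemma alpha_dist_le:
  assumes d: "\<forall>i. d i \<ge> 1" and e: "\<forall>i. e i \<ge> 1"
    and agree: "\<forall>i<p. d i = e i" and "i \<le> p"
  shows "\<bar>alpha i d - alpha i e\<bar> \<le> 2 * (1/2)^(p - i)"
proof -
  let ?k = "p - i" and ?e = "\<lambda>j. e (j + i)"
  have ik: "i + ?k = p" using assms by simp
  have "alpha i d = cfin_tail ?k (\<lambda>j. d (j + i)) (alpha p d)"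
    using alpha_eq_cfin_tail[OF d, of i ?k] ik by simp
  also have "\<dots> = cfin_tail ?k ?e (alpha p d)" using agree by (intro cfin_tail_cong) auto
  finally have "\<bar>alpha i d - alpha i e\<bar> = \<bar>cfin_tail ?k ?e (alpha p d) - cfin_tail ?k ?e (alpha p e)\<bar>"
    using alpha_eq_cfin_tail[OF e, of i ?k] ik by simp
  also have "\<dots> \<le> 2 * (1/2)^?k * \<bar>alpha p d - alpha p e\<bar>"
    using e alpha_bounds[OF d, of p] alpha_bounds[OF e, of p] by (intro cfin_tail_contraction) auto
  also have "\<dots> \<le> 2 * (1/2)^?k * 1"
    using alpha_bounds[OF d, of p] alpha_bounds[OF e, of p] by (intro mult_left_mono) auto
  finally show ?thesis by simp
qed

definition brjuno_term :: "(nat \<Rightarrow> nat) \<Rightarrow> nat \<Rightarrow> real" where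
  "brjuno_term d k = (\<Prod>i<k. alpha i d) * ln (1 / alpha k d)"

lemma Phi_eq_suminf: "Phi d = suminf (brjuno_term d)"
  unfolding Phi_def brjuno_term_def ..

lemma Phi_minus_eq: "Phi_minus m n d = Phi d - brjuno_term d (n + m)"
  by (simp add: Phi_minus_def brjuno_term_def)

lemma ln_inverse_alpha_bounds:
  assumes "\<forall>i. d i \<ge> 1"
  shows "0 \<le> ln (1 / alpha k d)" "ln (1 / alpha k d) \<le> real (d k)"
proof -
  have a: "0 < alpha k d" "alpha k d \<le> 1" "1 / (real (d k) + 1) \<le> alpha k d"
    using alpha_pos[OF assms] alpha_bounds[OF assms] alpha_lower_bound[OF assms] by auto
  then show "0 \<le> ln (1 / alpha k d)" by simp
  have "1 / alpha k d \<le> real (d k) + 1"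
    using a by (simp add: divide_le_eq mult.commute)
  then have "ln (1 / alpha k d) \<le> ln (1 + real (d k))" using a by (simp add: add.commute)
  also have "\<dots> \<le> real (d k)" by (rule ln_add_one_self_le_self) simp
  finally show "ln (1 / alpha k d) \<le> real (d k)" .
qed

lemma brjuno_term_nonneg: "\<forall>i. d i \<ge> 1 \<Longrightarrow> 0 \<le> brjuno_term d k"
  unfolding brjuno_term_def using alpha_bounds(1) ln_inverse_alpha_bounds(1)
  by (simp add: prod_nonneg)

lemma brjuno_term_le:
  assumes "\<forall>i. d i \<ge> 1" "real (d k) \<le> B"
  shows "brjuno_term d k \<le> 2 * B * (3/4)^k"
proof -
  have "brjuno_term d k \<le> 2 * (3/4)^k * B"
    unfolding brjuno_term_def using assms prod_alpha_le[OF assms(1), of k] ln_inverse_alpha_bounds[OF assms(1), of k]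
    by (intro mult_mono) auto
  then show ?thesis by (simp add: mult_ac)
qed

lemma summable_brjuno_term:
  assumes "\<forall>i. d i \<ge> 1" "\<forall>i. real (d i) \<le> B"
  shows "summable (brjuno_term d)"
proof (rule summable_comparison_test')
  show "summable (\<lambda>k. 2 * B * (3/4::real)^k)"
    by (intro summable_mult summable_geometric) simp
  show "norm (brjuno_term d k) \<le> 2 * B * (3/4)^k" for k
    using brjuno_term_nonneg[OF assms(1)] brjuno_term_le[OF assms(1)] assms(2) by simp
qed

lemma abs_ln_diff_le:
  fixes c x y :: real
  assumes "0 < c" "c \<le> x" "c \<le> y"
  shows "\<bar>ln x - ln y\<bar> \<le> \<bar>x - y\<bar> / c"
proof -
  have "ln u - ln v \<le> \<bar>u - v\<bar> / c" if "c \<le> u" "c \<le> v" for u v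
  proof -
    have "ln u - ln v = ln (u / v)" using assms that by (simp add: ln_div)
    also have "\<dots> \<le> u / v - 1" using assms that by (intro ln_le_minus_one) simp
    also have "\<dots> = (u - v) / v" using assms that by (simp add: field_simps)
    also have "\<dots> \<le> \<bar>u - v\<bar> / v" using assms that by (intro divide_right_mono) auto
    also have "\<dots> \<le> \<bar>u - v\<bar> / c" using assms that by (intro divide_left_mono) auto
    finally show ?thesis .
  qed
  from this[of x y] this[of y x] show ?thesis using assms by (simp add: abs_minus_commute abs_le_iff)
qed

lemma brjuno_term_dist_le:
  assumes d: "\<forall>i. d i \<ge> 1" and e: "\<forall>i. e i \<ge> 1"
    and bounded: "\<forall>i\<le>k. real (d i) \<le> A \<and> real (e i) \<le> A"
    and close: "\<forall>i\<le>k. \<bar>alpha i d - alpha i e\<bar> \<le> \<delta>"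
  shows "\<bar>brjuno_term d k - brjuno_term e k\<bar> \<le> (real k * A + A + 1) * \<delta>"
proof -
  define Pd Pe Ld Le where "Pd = (\<Prod>i<k. alpha i d)" and "Pe = (\<Prod>i<k. alpha i e)"
    and "Ld = ln (1 / alpha k d)" and "Le = ln (1 / alpha k e)"
  have A: "A \<ge> 1" using bounded d[rule_format, of 0] by force
  have "\<bar>Pd - Pe\<bar> \<le> (\<Sum>i<k. \<bar>alpha i d - alpha i e\<bar>)"
    unfolding Pd_def Pe_def using norm_prod_diff[of "{..<k}" "\<lambda>i. alpha i d" "\<lambda>i. alpha i e"]
      alpha_bounds[OF d] alpha_bounds[OF e] by simp
  also have "\<dots> \<le> real k * \<delta>" using sum_mono[of "{..<k}" _ "\<lambda>_. \<delta>"] close by simp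
  finally have P: "\<bar>Pd - Pe\<bar> \<le> real k * \<delta>" .
  have lower: "1 / (A + 1) \<le> alpha k f" if "\<forall>i. f i \<ge> 1" "real (f k) \<le> A" for f
  proof -
    have "1 / (A + 1) \<le> 1 / (real (f k) + 1)"
      using A that(2) by (intro divide_left_mono) (auto intro: mult_pos_pos)
    also have "\<dots> \<le> alpha k f" by (rule alpha_lower_bound[OF that(1)])
    finally show ?thesis .
  qed
  have "\<bar>Ld - Le\<bar> = \<bar>ln (alpha k e) - ln (alpha k d)\<bar>"
    unfolding Ld_def Le_def using alpha_pos[OF d, of k] alpha_pos[OF e, of k] by (simp add: ln_div)
  also have "\<dots> \<le> \<bar>alpha k e - alpha k d\<bar> / (1 / (A + 1))"
    using A bounded lower[OF d] lower[OF e] by (intro abs_ln_diff_le) auto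
  also have "\<dots> \<le> (A + 1) * \<delta>" using close A by (simp add: abs_minus_commute mult_left_mono)
  finally have L: "\<bar>Ld - Le\<bar> \<le> (A + 1) * \<delta>" .
  have Ld: "0 \<le> Ld" "Ld \<le> A" unfolding Ld_def using ln_inverse_alpha_bounds[OF d, of k] bounded by auto
  have Pe: "0 \<le> Pe" "Pe \<le> 1" unfolding Pe_def using alpha_bounds[OF e] by (auto intro: prod_nonneg prod_le_1)
  have "brjuno_term d k - brjuno_term e k = (Pd - Pe) * Ld + Pe * (Ld - Le)"
    unfolding brjuno_term_def Pd_def Pe_def Ld_def Le_def by algebra
  also have "\<bar>\<dots>\<bar> \<le> \<bar>(Pd - Pe) * Ld\<bar> + \<bar>Pe * (Ld - Le)\<bar>" by (rule abs_triangle_ineq)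
  also have "\<dots> = \<bar>Pd - Pe\<bar> * Ld + Pe * \<bar>Ld - Le\<bar>" using Ld Pe by (simp add: abs_mult)
  also have "\<dots> \<le> (real k * \<delta>) * A + 1 * ((A + 1) * \<delta>)"
    using P L Ld Pe by (intro add_mono mult_mono) auto
  finally show ?thesis by (simp add: algebra_simps)
qed

lemma abs_brjuno_term_diff_le:
  assumes "\<forall>i. d i \<ge> 1" "\<forall>i. e i \<ge> 1" "real (d k) \<le> A" "real (e k) \<le> A"
  shows "\<bar>brjuno_term d k - brjuno_term e k\<bar> \<le> 2 * A * (3/4)^k"
  using brjuno_term_nonneg[OF assms(1), of k] brjuno_term_nonneg[OF assms(2), of k]
    brjuno_term_le[OF assms(1,3)] brjuno_term_le[OF assms(2,4)]
  by (simp add: abs_le_iff)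

lemma abs_suminf_le_split:
  fixes g :: "nat \<Rightarrow> real"
  assumes head: "\<forall>k<K. \<bar>g k\<bar> \<le> c" and geometric: "\<forall>k. \<bar>g k\<bar> \<le> B * r^k"
    and r: "0 \<le> r" "r < 1"
  shows "\<bar>suminf g\<bar> \<le> real K * c + B * r^K / (1 - r)"
proof -
  have tail_sums: "(\<lambda>j. B * r^K * r^j) sums (B * r^K / (1 - r))"
    using sums_mult[OF geometric_sums[of r], of "B * r^K"] r by simp
  have tail_le: "norm (g (j + K)) \<le> B * r^K * r^j" for j
    using geometric[rule_format, of "j + K"] by (simp add: power_add mult_ac)
  have "summable (\<lambda>j. g (j + K))"
    by (rule summable_comparison_test'[OF sums_summable[OF tail_sums] tail_le])
  then have "suminf g = (\<Sum>j. g (j + K)) + (\<Sum>k<K. g k)"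
    by (intro suminf_split_initial_segment) (simp add: summable_iff_shift)
  moreover have "\<bar>\<Sum>j. g (j + K)\<bar> \<le> B * r^K / (1 - r)"
    using norm_suminf_le[of "\<lambda>j. g (j + K)" "\<lambda>j. B * r^K * r^j"] tail_le tail_sums
    by (simp add: sums_iff)
  moreover have "\<bar>\<Sum>k<K. g k\<bar> \<le> real K * c"
  proof -
    have "\<bar>\<Sum>k<K. g k\<bar> \<le> (\<Sum>k<K. \<bar>g k\<bar>)" by (rule sum_abs)
    also have "\<dots> \<le> (\<Sum>k<K. c)" using head by (intro sum_mono) auto
    finally show ?thesis by simp
  qed
  ultimately show ?thesis by linarith
qed

lemma Phi_except_term_dist_le:
  assumes d: "\<forall>i. d i \<ge> 1" and e: "\<forall>i. e i \<ge> 1"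
    and agree: "\<forall>i. i \<noteq> p \<longrightarrow> d i = e i" and bounded: "\<forall>i. i \<noteq> p \<longrightarrow> real (d i) \<le> A"
    and "K + M \<le> p"
  shows "\<bar>(Phi d - brjuno_term d p) - (Phi e - brjuno_term e p)\<bar>
    \<le> 2 * real K * (real K * A + A + 1) * (1/2)^M + 8 * A * (3/4)^K"
proof -
  define g where "g k = (if k \<in> {p} then 0 else brjuno_term d k - brjuno_term e k)" for k
  have "1 \<le> real (d (Suc p))" "real (d (Suc p)) \<le> A" using d bounded by simp_all
  then have "A \<ge> 1" by linarith
  have "\<forall>i. real (d i) \<le> max A (real (d p))" "\<forall>i. real (e i) \<le> max A (real (e p))"
    using agree bounded by (metis max.coboundedI1 max.cobounded2)+
  then have "summable (brjuno_term d)" "summable (brjuno_term e)"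
    using summable_brjuno_term d e by blast+
  then have "(\<lambda>k. brjuno_term d k - brjuno_term e k) sums (Phi d - Phi e)"
    unfolding Phi_eq_suminf by (intro sums_diff summable_sums)
  then have "g sums ((Phi d - Phi e) + (\<Sum>k\<in>{p}. 0 - (brjuno_term d k - brjuno_term e k)))"
    unfolding g_def by (rule sums_If_finite_set') auto
  then have "(Phi d - brjuno_term d p) - (Phi e - brjuno_term e p) = suminf g"
    by (simp add: sums_iff)
  also have "\<bar>suminf g\<bar> \<le> real K * ((real K * A + A + 1) * (2 * (1/2)^M)) + 2 * A * (3/4)^K / (1 - 3/4)"
  proof (rule abs_suminf_le_split)
    show "\<forall>k. \<bar>g k\<bar> \<le> 2 * A * (3/4)^k"
      using \<open>A \<ge> 1\<close> agree bounded by (auto simp: g_def intro!: abs_brjuno_term_diff_le[OF d e])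
    have close: "\<bar>alpha i d - alpha i e\<bar> \<le> 2 * (1/2)^M" if "i < K" for i
    proof -
      have "\<bar>alpha i d - alpha i e\<bar> \<le> 2 * (1/2)^(p - i)"
        using agree \<open>K + M \<le> p\<close> that by (intro alpha_dist_le d e) auto
      also have "\<dots> \<le> 2 * (1/2)^M" using \<open>K + M \<le> p\<close> that by (simp add: power_decreasing)
      finally show ?thesis .
    qed
    have "\<bar>g k\<bar> \<le> (real K * A + A + 1) * (2 * (1/2)^M)" if "k < K" for k
    proof -
      have "\<bar>g k\<bar> = \<bar>brjuno_term d k - brjuno_term e k\<bar>" using that \<open>K + M \<le> p\<close> by (simp add: g_def)
      also have "\<dots> \<le> (real k * A + A + 1) * (2 * (1/2)^M)"
        using close agree bounded that \<open>K + M \<le> p\<close> by (intro brjuno_term_dist_le[OF d e]) auto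
      also have "\<dots> \<le> (real K * A + A + 1) * (2 * (1/2)^M)"
        using that \<open>A \<ge> 1\<close> by (intro mult_right_mono) auto
      finally show ?thesis .
    qed
    then show "\<forall>k<K. \<bar>g k\<bar> \<le> (real K * A + A + 1) * (2 * (1/2)^M)" by blast
  qed simp_all
  finally show ?thesis by (simp add: algebra_simps)
qed

lemma betaN_ge_1: "\<forall>i\<le>n. a i > 0 \<Longrightarrow> N \<ge> 1 \<Longrightarrow> \<forall>i. betaN a n m N i \<ge> 1"
  by (simp add: betaN_def Suc_le_eq)

lemma betaN_indep_N: "i \<noteq> n + m \<Longrightarrow> betaN a n m N i = betaN a n m 1 i"
  by (simp add: betaN_def)

lemma betaN_le_sum:
  assumes "i \<noteq> n + m"
  shows "real (betaN a n m N i) \<le> real (\<Sum>j\<le>n. a j) + 1"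
proof -
  have "a i \<le> (\<Sum>j\<le>n. a j)" if "i \<le> n" using that by (intro member_le_sum) auto
  then show ?thesis using assms by (auto simp: betaN_def simp del: of_nat_sum)
qed

theorem mainTheorem6:
  fixes a :: "nat \<Rightarrow> nat" and n :: nat
  assumes "\<forall>i\<le>n. a i > 0"
  shows "\<forall>\<epsilon>::real. \<epsilon> > 0 \<longrightarrow> (\<exists>m0::nat. m0 > 0 \<and> (\<forall>m N. m \<ge> m0 \<longrightarrow> N \<ge> 1 \<longrightarrow>
           \<bar>Phi_minus m n (betaN a n m N) - Phi_minus m n (betaN a n m 1)\<bar> < \<epsilon> / 4))"
proof (intro allI impI)
  fix \<epsilon> :: real assume "\<epsilon> > 0"
  define A where "A = real (\<Sum>j\<le>n. a j) + 1"
  obtain K where K: "8 * A * (3/4)^K < \<epsilon> / 8"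
    using exists_mult_power_less[of "3/4" "\<epsilon> / 8" "8 * A"] \<open>\<epsilon> > 0\<close> by auto
  obtain M where M: "2 * real K * (real K * A + A + 1) * (1/2)^M < \<epsilon> / 8"
    using exists_mult_power_less[of "1/2" "\<epsilon> / 8" "2 * real K * (real K * A + A + 1)"] \<open>\<epsilon> > 0\<close>
    by auto
  have "\<bar>Phi_minus m n (betaN a n m N) - Phi_minus m n (betaN a n m 1)\<bar> < \<epsilon> / 4"
    if "K + M + 1 \<le> m" "N \<ge> 1" for m N
  proof -
    have "\<bar>Phi_minus m n (betaN a n m N) - Phi_minus m n (betaN a n m 1)\<bar>
        \<le> 2 * real K * (real K * A + A + 1) * (1/2)^M + 8 * A * (3/4)^K"
      unfolding Phi_minus_eq A_def using assms that
      by (intro Phi_except_term_dist_le betaN_ge_1 allI impI betaN_indep_N betaN_le_sum) auto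
    then show ?thesis using K M by linarith
  qed
  then show "\<exists>m0>0. \<forall>m N. m \<ge> m0 \<longrightarrow> N \<ge> 1 \<longrightarrow>
      \<bar>Phi_minus m n (betaN a n m N) - Phi_minus m n (betaN a n m 1)\<bar> < \<epsilon> / 4"
    by (intro exI[of _ "K + M + 1"]) auto
qed

end
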